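(* Let $X$ be a real or complex separable infinite-dimensional F-space and $T:X\to X$ a continuous linear operator. If $T$ is recurrent and cyclic, then the set of cyclic vectors of $T$ is a dense $G_\delta$ subset of $X$. In particular, if $T$ is recurrent and cyclic, then $T$ is quasi-rigid.
   Context: An F-space is a completely metrizable topological vector space. $T$ is recurrent if the set of $x$ with $x\in\overline{\{T^nx:n\geq1\}}$ is dense in $X$. A vector $x$ is cyclic if $\mathrm{span}\{T^nx:n\geq0\}$ is dense in $X$; $T$ is cyclic if it has a cyclic vector. $T$ is quasi-rigid if there exist a strictly increasing sequence $(n_k)$ of positive integers and a dense $Y\subset X$ with $T^{n_k}x\to x$ for every $x\in Y$. *)

theory Defs
  imports "HOL-Analysis.Analysis"
begin

definition F_space ::
  "('k::{field,topological_space} \<Rightarrow> 'a::{ab_group_add,topological_space} \<Rightarrow> 'a) \<Rightarrow> bool" where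
  "F_space s \<longleftrightarrow> vector_space s
     \<and> continuous_on UNIV (\<lambda>p::'a \<times> 'a. fst p + snd p)
     \<and> continuous_on UNIV (\<lambda>p::'k \<times> 'a. s (fst p) (snd p))
     \<and> completely_metrizable_space (euclidean :: 'a topology)"

definition infinite_dimensional ::
  "('k::field \<Rightarrow> 'a::ab_group_add \<Rightarrow> 'a) \<Rightarrow> bool" where
  "infinite_dimensional s \<longleftrightarrow> \<not> (\<exists>B. finite B \<and> module.span s B = UNIV)"

definition recurrent :: "('a::topological_space \<Rightarrow> 'a) \<Rightarrow> bool" where
  "recurrent T \<longleftrightarrow>
     closure {x. x \<in> closure {(T ^^ n) x | n. n \<ge> 1}} = UNIV"

definition cyclic_vector ::
  "('k::field \<Rightarrow> 'a::{ab_group_add,topological_space} \<Rightarrow> 'a) \<Rightarrow> ('a \<Rightarrow> 'a) \<Rightarrow> 'a \<Rightarrow> bool" where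
  "cyclic_vector s T x \<longleftrightarrow> closure (module.span s {(T ^^ n) x | n. n \<ge> 0}) = UNIV"

definition cyclic ::
  "('k::field \<Rightarrow> 'a::{ab_group_add,topological_space} \<Rightarrow> 'a) \<Rightarrow> ('a \<Rightarrow> 'a) \<Rightarrow> bool" where
  "cyclic s T \<longleftrightarrow> (\<exists>x. cyclic_vector s T x)"

definition quasi_rigid :: "('a::topological_space \<Rightarrow> 'a) \<Rightarrow> bool" where
  "quasi_rigid T \<longleftrightarrow> (\<exists>n::nat \<Rightarrow> nat. strict_mono n \<and> (\<forall>k. n k \<ge> 1) \<and>
     (\<exists>Y. closure Y = UNIV \<and> (\<forall>x\<in>Y. (\<lambda>k. (T ^^ n k) x) \<longlonglongrightarrow> x)))"

end

theory Submission
  imports Defs "HOL-Computational_Algebra.Fundamental_Theorem_Algebra"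
begin

text \<open>
  Write \<open>p(T) = \<Sum> c\<^sub>i T\<^sup>i\<close>. If \<open>T^(n\<^sub>k) y \<rightarrow> y\<close> and \<open>|\<lambda>| < 1\<close>, the vectors
  \<open>(T^(n\<^sub>k) - \<lambda>^(n\<^sub>k)) y\<close> lie in the range of \<open>T - \<lambda>\<close>, since \<open>X - \<lambda>\<close> divides \<open>X\<^sup>n - \<lambda>\<^sup>n\<close>, and
  tend to \<open>y\<close>; for \<open>|\<lambda>| > 1\<close> use \<open>(1 - \<lambda>\<^sup>-\<^sup>n T\<^sup>n) y\<close> instead. As the recurrent vectors are dense,
  \<open>T - \<lambda>\<close> has dense range for \<open>|\<lambda>| \<noteq> 1\<close>; the same works over \<open>\<real>\<close> for the quadratic factors
  with non-real roots, so \<open>p(T)\<close> has dense range whenever \<open>p\<close> has no root on the unit circle.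

  Such a \<open>p(T)\<close> maps cyclic vectors to cyclic vectors. Given a cyclic \<open>x\<close>, every \<open>p(T)x\<close> is the
  limit of \<open>p(rT)x\<close> as \<open>r \<rightarrow> 1\<close>, and \<open>p(r\<cdot>)\<close> has no root on the unit circle for all but finitely
  many \<open>r\<close>; hence the cyclic vectors are dense. They form a \<open>G\<^sub>\<delta>\<close>: \<open>x\<close> is cyclic iff its
  polynomial orbit comes within \<open>1/k\<close> of every point of a countable dense set, for all \<open>k\<close>.

  The vectors returning within \<open>1/k\<close> of themselves after time \<open>N\<close> form dense open sets, so by
  Baire's theorem some cyclic vector \<open>x\<close> is recurrent, \<open>T^(n\<^sub>k) x \<rightarrow> x\<close>; then
  \<open>T^(n\<^sub>k) \<rightarrow> id\<close> on the dense set of vectors \<open>p(T)x\<close>, so \<open>T\<close> is quasi-rigid.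
\<close>

definition dense_range :: "('a \<Rightarrow> 'b::topological_space) \<Rightarrow> bool" where
  "dense_range f \<longleftrightarrow> closure (range f) = UNIV"

lemma dense_range_comp:
  assumes "continuous_on UNIV f" "dense_range f" "dense_range g"
  shows "dense_range (f \<circ> g)"
proof -
  have "f ` closure (range g) \<subseteq> closure (f ` range g)"
    using continuous_on_subset[OF assms(1) subset_UNIV]
    by (intro image_closure_subset closure_subset closed_closure)
  then have "range f \<subseteq> closure (range (f \<circ> g))"
    using assms(3) by (simp add: dense_range_def image_comp)
  then have "closure (range f) \<subseteq> closure (range (f \<circ> g))"
    by (simp add: closure_minimal)
  then show ?thesis
    using assms(2) unfolding dense_range_def by blast
qed

lemma closure_eq_UNIV_iff_meets_open:
  "closure A = UNIV \<longleftrightarrow> (\<forall>U. open U \<longrightarrow> U \<noteq> {} \<longrightarrow> U \<inter> A \<noteq> {})"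
proof (intro iffI allI impI)
  fix U :: "'a set"
  assume "closure A = UNIV" "open U" "U \<noteq> {}"
  then show "U \<inter> A \<noteq> {}"
    using open_Int_closure_eq_empty[of U A] by simp
next
  assume meets: "\<forall>U. open U \<longrightarrow> U \<noteq> {} \<longrightarrow> U \<inter> A \<noteq> {}"
  have "- closure A \<inter> A = {}"
    using closure_subset by blast
  then have "- closure A = {}"
    using meets by blast
  then show "closure A = UNIV"
    by blast
qed

lemma LIMSEQ_in_closure:
  assumes "\<And>n. f n \<in> A" "f \<longlonglongrightarrow> l"
  shows "l \<in> closure A"
proof (rule Lim_in_closed_set[OF closed_closure _ sequentially_bot assms(2)])
  show "\<forall>\<^sub>F n in sequentially. f n \<in> closure A"
    using assms(1) closure_subset by (intro always_eventually) blast
qed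

locale tvs_operator =
  fixes s :: "'k::real_normed_field \<Rightarrow> 'a::{ab_group_add,topological_space} \<Rightarrow> 'a"
    and T :: "'a \<Rightarrow> 'a"
  assumes vector_space: "vector_space s"
    and continuous_add: "continuous_on UNIV (\<lambda>p::'a \<times> 'a. fst p + snd p)"
    and continuous_scale: "continuous_on UNIV (\<lambda>p::'k \<times> 'a. s (fst p) (snd p))"
    and linear_T: "Vector_Spaces.linear s s T"
    and continuous_T: "continuous_on UNIV T"
begin

sublocale m: module s
  using vector_space by (simp add: module_iff_vector_space)

sublocale h: module_hom s s T
  using linear_T by (simp add: module_hom_iff_linear)

lemma tendsto_add_tvs:
  fixes f g :: "'b \<Rightarrow> 'a"
  shows "(f \<longlongrightarrow> a) F \<Longrightarrow> (g \<longlongrightarrow> b) F \<Longrightarrow> ((\<lambda>x. f x + g x) \<longlongrightarrow> a + b) F"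
  using continuous_on_tendsto_compose[OF continuous_add tendsto_Pair, of f a F g b] by simp

lemma tendsto_scale_tvs:
  fixes f :: "'b \<Rightarrow> 'k" and g :: "'b \<Rightarrow> 'a"
  shows "(f \<longlongrightarrow> a) F \<Longrightarrow> (g \<longlongrightarrow> b) F \<Longrightarrow> ((\<lambda>x. s (f x) (g x)) \<longlongrightarrow> s a b) F"
  using continuous_on_tendsto_compose[OF continuous_scale tendsto_Pair, of f a F g b] by simp

lemma tendsto_diff_tvs:
  fixes f g :: "'b \<Rightarrow> 'a"
  assumes "(f \<longlongrightarrow> a) F" "(g \<longlongrightarrow> b) F"
  shows "((\<lambda>x. f x - g x) \<longlongrightarrow> a - b) F"
proof -
  have "((\<lambda>x. f x + s (-1) (g x)) \<longlongrightarrow> a + s (-1) b) F"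
    by (intro tendsto_add_tvs tendsto_scale_tvs tendsto_const assms)
  then show ?thesis by simp
qed

lemma tendsto_sum_tvs:
  fixes f :: "'c \<Rightarrow> 'b \<Rightarrow> 'a"
  shows "(\<And>i. i \<in> I \<Longrightarrow> (f i \<longlongrightarrow> a i) F) \<Longrightarrow> ((\<lambda>x. \<Sum>i\<in>I. f i x) \<longlongrightarrow> (\<Sum>i\<in>I. a i)) F"
  by (induction I rule: infinite_finite_induct) (simp_all add: tendsto_add_tvs)

lemma tendsto_T:
  fixes f :: "'b \<Rightarrow> 'a"
  shows "(f \<longlongrightarrow> a) F \<Longrightarrow> ((\<lambda>x. T (f x)) \<longlongrightarrow> T a) F"
  using continuous_on_tendsto_compose[OF continuous_T, of f a F] by simp

lemma tendsto_funpow_T: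
  fixes f :: "'b \<Rightarrow> 'a"
  assumes "(f \<longlongrightarrow> a) F"
  shows "((\<lambda>x. (T ^^ n) (f x)) \<longlongrightarrow> (T ^^ n) a) F"
proof (induction n)
  case (Suc n)
  then show ?case
    using tendsto_T[OF Suc] by simp
qed (simp add: assms)

section \<open>Polynomials in the operator\<close>

definition poly_op :: "'k poly \<Rightarrow> 'a \<Rightarrow> 'a" where
  "poly_op p x = (\<Sum>i\<le>degree p. s (coeff p i) ((T ^^ i) x))"

lemma poly_op_eq_sum:
  assumes "degree p \<le> N"
  shows "poly_op p x = (\<Sum>i\<le>N. s (coeff p i) ((T ^^ i) x))"
  unfolding poly_op_def
  by (rule sum.mono_neutral_left) (auto simp: coeff_eq_0 assms)

lemma poly_op_0 [simp]: "poly_op 0 x = 0"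
  by (simp add: poly_op_def)

lemma poly_op_const [simp]: "poly_op [:c:] x = s c x"
  by (simp add: poly_op_def)

lemma poly_op_one [simp]: "poly_op 1 x = x"
  by (simp add: poly_op_def)

lemma poly_op_pCons: "poly_op (pCons a p) x = s a x + T (poly_op p x)"
proof -
  have "poly_op (pCons a p) x = (\<Sum>i\<le>Suc (degree p). s (coeff (pCons a p) i) ((T ^^ i) x))"
    by (rule poly_op_eq_sum) (simp add: degree_pCons_le)
  also have "\<dots> = s a x + (\<Sum>i\<le>degree p. s (coeff p i) ((T ^^ Suc i) x))"
    by (subst sum.atMost_Suc_shift) simp
  also have "(\<Sum>i\<le>degree p. s (coeff p i) ((T ^^ Suc i) x)) = T (poly_op p x)"
    by (simp add: poly_op_def h.sum h.scale funpow_swap1)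
  finally show ?thesis .
qed

lemma poly_op_add: "poly_op (p + q) x = poly_op p x + poly_op q x"
proof -
  let ?N = "max (degree p) (degree q)"
  have "poly_op (p + q) x = (\<Sum>i\<le>?N. s (coeff (p + q) i) ((T ^^ i) x))"
    by (rule poly_op_eq_sum) (simp add: degree_add_le)
  also have "\<dots> = (\<Sum>i\<le>?N. s (coeff p i) ((T ^^ i) x)) + (\<Sum>i\<le>?N. s (coeff q i) ((T ^^ i) x))"
    by (simp add: m.scale_left_distrib sum.distrib)
  also have "\<dots> = poly_op p x + poly_op q x"
    by (simp add: poly_op_eq_sum[symmetric])
  finally show ?thesis .
qed

lemma poly_op_smult: "poly_op (smult c p) x = s c (poly_op p x)"
  by (simp add: poly_op_eq_sum[of "smult c p" "degree p"] poly_op_def m.scale_sum_right)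

lemma poly_op_diff: "poly_op (p - q) x = poly_op p x - poly_op q x"
  using poly_op_add[of "p - q" q x] by (simp add: eq_diff_eq)

lemma poly_op_mult: "poly_op (p * q) x = poly_op p (poly_op q x)"
proof (induction p arbitrary: x)
  case (pCons a p)
  have "poly_op (pCons a p * q) x = poly_op (smult a q) x + poly_op (pCons 0 (p * q)) x"
    by (simp add: poly_op_add)
  also have "\<dots> = poly_op (pCons a p) (poly_op q x)"
    by (simp add: poly_op_smult poly_op_pCons pCons.IH)
  finally show ?case .
qed simp

lemma poly_op_commute: "poly_op p (poly_op q x) = poly_op q (poly_op p x)"
  by (simp only: poly_op_mult[symmetric] mult.commute)

lemma poly_op_monom: "poly_op (monom 1 n) x = (T ^^ n) x"
proof -
  have "poly_op (monom 1 n) x = (\<Sum>i\<le>n. s (coeff (monom 1 n) i) ((T ^^ i) x))"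
    by (rule poly_op_eq_sum) (simp add: degree_monom_le)
  also have "\<dots> = (\<Sum>i\<in>{n}. s (coeff (monom 1 n) i) ((T ^^ i) x))"
    by (rule sum.mono_neutral_right) auto
  finally show ?thesis by simp
qed

lemma poly_op_funpow_T: "poly_op p ((T ^^ n) x) = (T ^^ n) (poly_op p x)"
  using poly_op_commute[of p "monom 1 n"] by (simp add: poly_op_monom)

lemma tendsto_poly_op:
  fixes f :: "'b \<Rightarrow> 'a"
  shows "(f \<longlongrightarrow> a) F \<Longrightarrow> ((\<lambda>x. poly_op p (f x)) \<longlongrightarrow> poly_op p a) F"
  unfolding poly_op_def by (intro tendsto_sum_tvs tendsto_scale_tvs tendsto_const tendsto_funpow_T)

lemma continuous_on_poly_op: "continuous_on A (poly_op p)"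
  unfolding continuous_on_def using tendsto_poly_op[OF tendsto_ident_at] by blast

lemma dense_range_poly_op_const:
  assumes "c \<noteq> 0"
  shows "dense_range (poly_op [:c:])"
proof -
  have "poly_op [:c:] (s (inverse c) x) = x" for x
    using assms by simp
  then have "surj (poly_op [:c:])"
    by (rule surjI)
  then show ?thesis by (simp add: dense_range_def)
qed

lemma dense_range_poly_op_mult:
  "dense_range (poly_op p) \<Longrightarrow> dense_range (poly_op q) \<Longrightarrow> dense_range (poly_op (p * q))"
  using dense_range_comp[OF continuous_on_poly_op] by (simp add: comp_def poly_op_mult[abs_def])

section \<open>Dense range of \<open>p(T)\<close> from recurrence\<close>

definition recurrent_points :: "'a set" where
  "recurrent_points = {y. \<exists>r. strict_mono r \<and> (\<lambda>k. (T ^^ r k) y) \<longlonglongrightarrow> y}"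

lemma in_closure_range_poly_op_if_dvd:
  assumes "\<And>n. p dvd u n" "(\<lambda>n. poly_op (u n) y) \<longlonglongrightarrow> y"
  shows "y \<in> closure (range (poly_op p))"
proof (rule LIMSEQ_in_closure[OF _ assms(2)])
  fix n
  obtain h where "u n = p * h"
    using assms(1) by (rule dvdE)
  then show "poly_op (u n) y \<in> range (poly_op p)"
    by (simp add: poly_op_mult)
qed

text \<open>Along a return sequence \<open>T^(n\<^sub>k) y \<rightarrow> y\<close> both polynomials, applied to \<open>y\<close>, tend to \<open>y\<close>.
  The term \<open>a\<^sub>n + b\<^sub>n X\<close> is the remainder of \<open>X\<^sup>n\<close> (of \<open>X\<^sup>-\<^sup>n\<close> in the second form) modulo \<open>p\<close>;
  it cannot be taken constant for the real quadratic factors.\<close>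

lemma recurrent_point_in_closure_range_poly_op:
  fixes a b :: "nat \<Rightarrow> 'k"
  assumes y: "y \<in> recurrent_points"
    and a: "a \<longlonglongrightarrow> 0" and b: "b \<longlonglongrightarrow> 0"
    and dvd: "(\<forall>n. p dvd monom 1 n - [:a n, b n:]) \<or> (\<forall>n. p dvd 1 - [:a n, b n:] * monom 1 n)"
  shows "y \<in> closure (range (poly_op p))"
proof -
  obtain r where r: "strict_mono r" "(\<lambda>k. (T ^^ r k) y) \<longlonglongrightarrow> y"
    using y by (auto simp: recurrent_points_def)
  have lim: "(\<lambda>k. x k - (s (a (r k)) (z k) + T (s (b (r k)) (z k)))) \<longlonglongrightarrow> y"
    if "x \<longlonglongrightarrow> y" "z \<longlonglongrightarrow> y" for x z :: "nat \<Rightarrow> 'a"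
  proof -
    have ab: "(\<lambda>k. a (r k)) \<longlonglongrightarrow> 0" "(\<lambda>k. b (r k)) \<longlonglongrightarrow> 0"
      using LIMSEQ_subseq_LIMSEQ[OF a r(1)] LIMSEQ_subseq_LIMSEQ[OF b r(1)] by (simp_all add: o_def)
    have "(\<lambda>k. x k - (s (a (r k)) (z k) + T (s (b (r k)) (z k)))) \<longlonglongrightarrow> y - (s 0 y + T (s 0 y))"
      by (intro tendsto_diff_tvs tendsto_add_tvs tendsto_scale_tvs tendsto_T ab that)
    then show ?thesis
      by simp
  qed
  from dvd show ?thesis
  proof
    assume "\<forall>n. p dvd monom 1 n - [:a n, b n:]"
    moreover have "poly_op (monom 1 n - [:a n, b n:]) y = (T ^^ n) y - (s (a n) y + T (s (b n) y))" for n
      by (simp add: poly_op_diff poly_op_monom poly_op_pCons)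
    ultimately show ?thesis
      using lim[OF r(2) tendsto_const]
      by (intro in_closure_range_poly_op_if_dvd[where u = "\<lambda>k. monom 1 (r k) - [:a (r k), b (r k):]"]) auto
  next
    assume "\<forall>n. p dvd 1 - [:a n, b n:] * monom 1 n"
    moreover have "poly_op (1 - [:a n, b n:] * monom 1 n) y
        = y - (s (a n) ((T ^^ n) y) + T (s (b n) ((T ^^ n) y)))" for n
      by (simp only: poly_op_diff poly_op_mult poly_op_one poly_op_monom poly_op_pCons poly_op_0 h.zero add_0_right)
    ultimately show ?thesis
      using lim[OF tendsto_const r(2)]
      by (intro in_closure_range_poly_op_if_dvd[where u = "\<lambda>k. 1 - [:a (r k), b (r k):] * monom 1 (r k)"]) auto
  qed
qed

lemma dense_range_poly_op_if_dvd:
  fixes a b :: "nat \<Rightarrow> 'k"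
  assumes dense: "closure recurrent_points = UNIV"
    and "a \<longlonglongrightarrow> 0" "b \<longlonglongrightarrow> 0"
    and "(\<forall>n. p dvd monom 1 n - [:a n, b n:]) \<or> (\<forall>n. p dvd 1 - [:a n, b n:] * monom 1 n)"
  shows "dense_range (poly_op p)"
proof -
  have "closure recurrent_points \<subseteq> closure (range (poly_op p))"
    using recurrent_point_in_closure_range_poly_op[OF _ assms(2-4)] by (intro closure_minimal) auto
  then show ?thesis
    using dense unfolding dense_range_def by blast
qed

lemma dense_range_poly_op_linear:
  assumes dense: "closure recurrent_points = UNIV" and l: "norm l \<noteq> 1"
  shows "dense_range (poly_op [:-l, 1:])"
proof (cases "norm l < 1")
  case True
  have "[:-l, 1:] dvd monom 1 n - [:l ^ n, 0:]" for n
    by (simp add: poly_eq_0_iff_dvd[symmetric] poly_monom)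
  then show ?thesis
    using LIMSEQ_power_zero[OF True] by (intro dense_range_poly_op_if_dvd[OF dense, where b = "\<lambda>_. 0"]) auto
next
  case False
  then have "norm (inverse l) < 1" "l \<noteq> 0"
    using l by (auto simp: norm_inverse inverse_less_1_iff)
  have "[:-l, 1:] dvd 1 - [:inverse l ^ n, 0:] * monom 1 n" for n
    using \<open>l \<noteq> 0\<close> by (simp add: poly_eq_0_iff_dvd[symmetric] poly_monom power_inverse)
  then show ?thesis
    using LIMSEQ_power_zero[OF \<open>norm (inverse l) < 1\<close>]
    by (intro dense_range_poly_op_if_dvd[OF dense, where b = "\<lambda>_. 0"]) auto
qed

section \<open>Density of cyclic vectors and quasi-rigidity\<close>

lemma span_orbit_eq_range_poly_op: "m.span {(T ^^ n) x | n. n \<ge> 0} = range (\<lambda>p. poly_op p x)"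
proof
  show "m.span {(T ^^ n) x | n. n \<ge> 0} \<subseteq> range (\<lambda>p. poly_op p x)"
  proof (rule m.span_minimal)
    show "{(T ^^ n) x | n. n \<ge> 0} \<subseteq> range (\<lambda>p. poly_op p x)"
    proof safe
      fix n :: nat
      show "(T ^^ n) x \<in> range (\<lambda>p. poly_op p x)"
        using rangeI[of "\<lambda>p. poly_op p x" "monom 1 n"] by (simp add: poly_op_monom)
    qed
    show "m.subspace (range (\<lambda>p. poly_op p x))"
      unfolding m.subspace_def
    proof (intro conjI ballI allI)
      show "0 \<in> range (\<lambda>p. poly_op p x)"
        using poly_op_0 by (metis rangeI)
    next
      fix u v
      assume "u \<in> range (\<lambda>p. poly_op p x)" "v \<in> range (\<lambda>p. poly_op p x)"
      then show "u + v \<in> range (\<lambda>p. poly_op p x)"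
        by (auto simp: poly_op_add[symmetric])
    next
      fix c u
      assume "u \<in> range (\<lambda>p. poly_op p x)"
      then show "s c u \<in> range (\<lambda>p. poly_op p x)"
        by (auto simp: poly_op_smult[symmetric])
    qed
  qed
  show "range (\<lambda>p. poly_op p x) \<subseteq> m.span {(T ^^ n) x | n. n \<ge> 0}"
  proof safe
    fix p
    show "poly_op p x \<in> m.span {(T ^^ n) x | n. n \<ge> 0}"
      unfolding poly_op_def by (rule m.span_sum, rule m.span_scale, rule m.span_base) auto
  qed
qed

lemma cyclic_vector_iff_dense_range: "cyclic_vector s T x \<longleftrightarrow> dense_range (\<lambda>p. poly_op p x)"
  unfolding cyclic_vector_def dense_range_def span_orbit_eq_range_poly_op ..

lemma cyclic_vector_poly_op:
  assumes "cyclic_vector s T x" "dense_range (poly_op q)"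
  shows "cyclic_vector s T (poly_op q x)"
proof -
  have "(\<lambda>p. poly_op p (poly_op q x)) = poly_op q \<circ> (\<lambda>p. poly_op p x)"
    by (simp add: fun_eq_iff poly_op_commute)
  then show ?thesis
    using assms dense_range_comp[OF continuous_on_poly_op] by (simp add: cyclic_vector_iff_dense_range)
qed

lemma tendsto_poly_op_dilation:
  assumes "c \<longlonglongrightarrow> 1"
  shows "(\<lambda>n. poly_op (q \<circ>\<^sub>p [:0, c n:]) x) \<longlonglongrightarrow> poly_op q x"
proof -
  have "poly_op (q \<circ>\<^sub>p [:0, c n:]) x = (\<Sum>i\<le>degree q. s (c n ^ i * coeff q i) ((T ^^ i) x))" for n
  proof -
    have "degree (q \<circ>\<^sub>p [:0, c n:]) \<le> degree q * degree [:0, c n:]"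
      by (rule degree_pcompose_le)
    also have "\<dots> \<le> degree q"
      by (cases "c n = 0") simp_all
    finally have "degree (q \<circ>\<^sub>p [:0, c n:]) \<le> degree q" .
    then show ?thesis
      by (simp add: poly_op_eq_sum coeff_pcompose_linear)
  qed
  moreover have "(\<lambda>n. \<Sum>i\<le>degree q. s (c n ^ i * coeff q i) ((T ^^ i) x))
      \<longlonglongrightarrow> (\<Sum>i\<le>degree q. s (1 ^ i * coeff q i) ((T ^^ i) x))"
    by (intro tendsto_sum_tvs tendsto_scale_tvs tendsto_mult tendsto_power assms tendsto_const)
  ultimately show ?thesis
    by (simp add: poly_op_def)
qed

text \<open>For \<open>p \<noteq> 0\<close> the approximants are dilations \<open>p(rT)\<close> with \<open>r \<rightarrow> 1\<close>; for \<open>p = 0\<close>,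
  small nonzero constants.\<close>

lemma poly_op_approx_by_dense_range:
  assumes dilations: "\<And>q. q \<noteq> 0 \<Longrightarrow> finite {r. r > 0 \<and> \<not> dense_range (poly_op (q \<circ>\<^sub>p [:0, of_real r:]))}"
  obtains q where "\<forall>\<^sub>F n in sequentially. dense_range (poly_op (q n))"
    and "(\<lambda>n. poly_op (q n) x) \<longlonglongrightarrow> poly_op p x"
proof (cases "p = 0")
  case True
  have inverse_Suc: "(\<lambda>n. of_real (inverse (real (Suc n))) :: 'k) \<longlonglongrightarrow> 0"
    using tendsto_of_real[OF LIMSEQ_inverse_real_of_nat, where 'a = 'k] by simp
  have "(\<lambda>n. s (of_real (inverse (real (Suc n)))) x) \<longlonglongrightarrow> s 0 x"
    by (intro tendsto_scale_tvs inverse_Suc tendsto_const)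
  moreover have "dense_range (poly_op [:of_real (inverse (real (Suc n))):])" for n
    by (intro dense_range_poly_op_const) (unfold of_real_eq_0_iff, simp)
  ultimately show ?thesis
    using True by (intro that[of "\<lambda>n. [:of_real (inverse (real (Suc n))):]"]) auto
next
  case False
  define c where "c n = 1 + inverse (real (Suc n))" for n
  let ?bad = "{r. r > 0 \<and> \<not> dense_range (poly_op (p \<circ>\<^sub>p [:0, of_real r:]))}"
  have "(\<lambda>n. of_real (c n) :: 'k) \<longlonglongrightarrow> of_real (1 + 0)"
    unfolding c_def by (intro tendsto_of_real tendsto_add tendsto_const LIMSEQ_inverse_real_of_nat)
  then have "(\<lambda>n. poly_op (p \<circ>\<^sub>p [:0, of_real (c n):]) x) \<longlonglongrightarrow> poly_op p x"
    by (intro tendsto_poly_op_dilation) simp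
  moreover have "\<forall>\<^sub>F n in sequentially. c n \<notin> ?bad"
  proof -
    have "inj c"
      by (rule injI) (simp add: c_def)
    then have "finite (c -` ?bad)"
      using dilations[OF False] by (intro finite_vimageI)
    then show ?thesis
      by (simp add: cofinite_eq_sequentially[symmetric] eventually_cofinite)
  qed
  then have "\<forall>\<^sub>F n in sequentially. dense_range (poly_op (p \<circ>\<^sub>p [:0, of_real (c n):]))"
    by (rule eventually_mono) (simp add: c_def add_pos_pos)
  ultimately show ?thesis
    by (intro that)
qed

lemma dense_cyclic_vectors:
  assumes dilations: "\<And>q. q \<noteq> 0 \<Longrightarrow> finite {r. r > 0 \<and> \<not> dense_range (poly_op (q \<circ>\<^sub>p [:0, of_real r:]))}"
    and x: "cyclic_vector s T x"
  shows "closure {x. cyclic_vector s T x} = UNIV"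
  unfolding closure_eq_UNIV_iff_meets_open
proof (intro allI impI)
  fix U :: "'a set"
  assume U: "open U" "U \<noteq> {}"
  obtain p where p: "poly_op p x \<in> U"
    using x U by (auto simp: cyclic_vector_iff_dense_range dense_range_def closure_eq_UNIV_iff_meets_open)
  obtain q where "\<forall>\<^sub>F n in sequentially. dense_range (poly_op (q n))"
    and "(\<lambda>n. poly_op (q n) x) \<longlonglongrightarrow> poly_op p x"
    using poly_op_approx_by_dense_range[OF dilations] by blast
  then have "\<forall>\<^sub>F n in sequentially. dense_range (poly_op (q n)) \<and> poly_op (q n) x \<in> U"
    using p U(1) by (intro eventually_conj topological_tendstoD)
  then obtain n where "dense_range (poly_op (q n))" "poly_op (q n) x \<in> U"
    using eventually_happens' sequentially_bot by blast
  then show "U \<inter> {x. cyclic_vector s T x} \<noteq> {}"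
    using cyclic_vector_poly_op[OF x] by blast
qed

lemma quasi_rigid_if_recurrent_cyclic_vector:
  assumes x: "cyclic_vector s T x" "x \<in> recurrent_points"
  shows "quasi_rigid T"
proof -
  obtain r where r: "strict_mono r" "(\<lambda>k. (T ^^ r k) x) \<longlonglongrightarrow> x"
    using x(2) by (auto simp: recurrent_points_def)
  define n where "n k = r (Suc k)" for k
  have "strict_mono n"
    using r(1) by (simp add: strict_mono_def n_def)
  moreover have "\<forall>k. n k \<ge> 1"
  proof
    fix k
    show "n k \<ge> 1"
      using seq_suble[OF r(1), of "Suc k"] by (simp add: n_def)
  qed
  moreover have "(\<lambda>k. (T ^^ n k) y) \<longlonglongrightarrow> y" if y: "y \<in> range (\<lambda>p. poly_op p x)" for y
  proof -
    obtain p where y: "y = poly_op p x"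
      using y by blast
    have "(\<lambda>k. poly_op p ((T ^^ n k) x)) \<longlonglongrightarrow> poly_op p x"
      using tendsto_poly_op[OF LIMSEQ_Suc[OF r(2)]] by (simp add: n_def)
    then show ?thesis
      by (simp add: y poly_op_funpow_T)
  qed
  moreover have "closure (range (\<lambda>p. poly_op p x)) = UNIV"
    using x(1) by (simp add: cyclic_vector_iff_dense_range dense_range_def)
  ultimately show ?thesis
    unfolding quasi_rigid_def by blast
qed

end

section \<open>Factorization over the real and complex scalars\<close>

lemma map_poly_of_real_add:
  "map_poly (of_real :: real \<Rightarrow> 'a::real_algebra_1) (p + q) = map_poly of_real p + map_poly of_real q"
  by (rule poly_eqI) (simp add: coeff_map_poly)

lemma map_poly_of_real_diff:
  "map_poly (of_real :: real \<Rightarrow> 'a::real_algebra_1) (p - q) = map_poly of_real p - map_poly of_real q"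
  by (rule poly_eqI) (simp add: coeff_map_poly)

lemma map_poly_of_real_mult:
  "map_poly (of_real :: real \<Rightarrow> 'a::{comm_ring_1,real_algebra_1}) (p * q) = map_poly of_real p * map_poly of_real q"
  by (induction p) (simp_all add: map_poly_pCons map_poly_smult map_poly_of_real_add)

lemma map_poly_of_real_pcompose:
  "map_poly (of_real :: real \<Rightarrow> 'a::{comm_ring_1,real_algebra_1}) (p \<circ>\<^sub>p q) = map_poly of_real p \<circ>\<^sub>p map_poly of_real q"
  by (induction p) (simp_all add: pcompose_pCons map_poly_pCons map_poly_of_real_add map_poly_of_real_mult)

lemma poly_map_poly_of_real:
  "poly (map_poly (of_real :: real \<Rightarrow> 'a::{comm_ring_1,real_algebra_1}) p) (of_real x) = of_real (poly p x)"
  by (induction p) (simp_all add: map_poly_pCons)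

text \<open>The real polynomial \<open>(X - \<mu>)(X - \<mu>\<^sup>*)\<close>.\<close>

definition conj_quadratic :: "complex \<Rightarrow> real poly" where
  "conj_quadratic \<mu> = [:(cmod \<mu>)\<^sup>2, - 2 * Re \<mu>, 1:]"

lemma poly_conj_quadratic_root: "poly (map_poly of_real (conj_quadratic \<mu>)) \<mu> = 0"
proof -
  have "(cmod \<mu>)\<^sup>2 = (Re \<mu>)\<^sup>2 + (Im \<mu>)\<^sup>2"
    by (rule cmod_power2)
  then show ?thesis
    by (simp add: conj_quadratic_def map_poly_pCons complex_eq_iff power2_eq_square algebra_simps)
qed

lemma conj_quadratic_dvd:
  assumes root: "poly (map_poly complex_of_real f) \<mu> = 0" and im: "Im \<mu> \<noteq> 0"
  shows "conj_quadratic \<mu> dvd f"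
proof -
  define q where "q = conj_quadratic \<mu>"
  define r where "r = f mod q"
  have "r = 0"
  proof (rule ccontr)
    assume "r \<noteq> 0"
    then have "degree r < 2"
      using degree_mod_less'[of q f] by (simp add: r_def q_def conj_quadratic_def)
    then have r: "r = [:coeff r 0, coeff r 1:]"
      by (intro poly_eqI) (auto simp: coeff_pCons coeff_eq_0 split: nat.splits)
    have "f = q * (f div q) + r"
      by (simp add: r_def)
    then have "poly (map_poly complex_of_real r) \<mu> = 0"
      using root poly_conj_quadratic_root[of \<mu>]
      by (metis q_def map_poly_of_real_add map_poly_of_real_mult poly_add poly_mult mult_zero_left add_0)
    then have "coeff r 0 + Re \<mu> * coeff r 1 = 0" "Im \<mu> * coeff r 1 = 0"
      by (subst (asm) r; simp add: map_poly_pCons complex_eq_iff)+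
    then have "coeff r 1 = 0" "coeff r 0 = 0"
      using im by simp_all
    with r \<open>r \<noteq> 0\<close> show False
      by simp
  qed
  then show ?thesis
    by (simp add: r_def q_def mod_eq_0_iff_dvd)
qed

locale real_tvs_operator = tvs_operator s T
  for s :: "real \<Rightarrow> 'a::{ab_group_add,topological_space} \<Rightarrow> 'a" and T
begin

lemma dense_range_poly_op_conj_quadratic:
  assumes dense: "closure recurrent_points = UNIV" and im: "Im \<mu> \<noteq> 0" and nm: "cmod \<mu> \<noteq> 1"
  shows "dense_range (poly_op (conj_quadratic \<mu>))"
proof -
  define A where "A w = Re w - Im w / Im \<mu> * Re \<mu>" for w
  define B where "B w = Im w / Im \<mu>" for w
  have AB: "poly (map_poly complex_of_real [:A w, B w:]) \<mu> = w" for w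
    using im by (simp add: map_poly_pCons A_def B_def complex_eq_iff field_simps)
  have lim: "(\<lambda>n. A (w n)) \<longlonglongrightarrow> 0" "(\<lambda>n. B (w n)) \<longlonglongrightarrow> 0" if "w \<longlonglongrightarrow> 0" for w
  proof -
    have "(\<lambda>n. A (w n)) \<longlonglongrightarrow> Re 0 - Im 0 / Im \<mu> * Re \<mu>" "(\<lambda>n. B (w n)) \<longlonglongrightarrow> Im 0 / Im \<mu>"
      unfolding A_def B_def by (intro tendsto_intros that im)+
    then show "(\<lambda>n. A (w n)) \<longlonglongrightarrow> 0" "(\<lambda>n. B (w n)) \<longlonglongrightarrow> 0"
      by simp_all
  qed
  show ?thesis
  proof (cases "cmod \<mu> < 1")
    case True
    have "conj_quadratic \<mu> dvd monom 1 n - [:A (\<mu> ^ n), B (\<mu> ^ n):]" for n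
      using im by (intro conj_quadratic_dvd) (simp add: map_poly_of_real_diff map_poly_monom poly_monom AB)
    then show ?thesis
      using lim[OF LIMSEQ_power_zero[OF True]]
      by (intro dense_range_poly_op_if_dvd[OF dense, where a = "\<lambda>n. A (\<mu> ^ n)" and b = "\<lambda>n. B (\<mu> ^ n)"]) auto
  next
    case False
    then have "cmod (inverse \<mu>) < 1" "\<mu> \<noteq> 0"
      using nm by (auto simp: norm_inverse inverse_less_1_iff)
    have "conj_quadratic \<mu> dvd 1 - [:A (inverse \<mu> ^ n), B (inverse \<mu> ^ n):] * monom 1 n" for n
      using im \<open>\<mu> \<noteq> 0\<close>
      by (intro conj_quadratic_dvd)
        (simp add: map_poly_of_real_diff map_poly_of_real_mult map_poly_monom poly_monom AB power_inverse
          del: mult_pCons_left)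
    then show ?thesis
      using lim[OF LIMSEQ_power_zero[OF \<open>cmod (inverse \<mu>) < 1\<close>]]
      by (intro dense_range_poly_op_if_dvd[OF dense,
            where a = "\<lambda>n. A (inverse \<mu> ^ n)" and b = "\<lambda>n. B (inverse \<mu> ^ n)"]) auto
  qed
qed

lemma real_factor_with_dense_range:
  assumes dense: "closure recurrent_points = UNIV"
    and \<mu>: "poly (map_poly complex_of_real p) \<mu> = 0" and "cmod \<mu> \<noteq> 1"
  obtains d g where "p = d * g" "degree d > 0" "dense_range (poly_op d)"
proof (cases "Im \<mu> = 0")
  case True
  then have "\<mu> = of_real (Re \<mu>)"
    by (simp add: complex_eq_iff)
  then have "poly p (Re \<mu>) = 0"
    using \<mu> poly_map_poly_of_real[where 'a = complex, of p "Re \<mu>"] by (metis of_real_eq_0_iff)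
  then obtain g where "p = [:- Re \<mu>, 1:] * g"
    by (auto simp: poly_eq_0_iff_dvd elim: dvdE)
  moreover have "dense_range (poly_op [:- Re \<mu>, 1:])"
    using \<open>cmod \<mu> \<noteq> 1\<close> True by (intro dense_range_poly_op_linear[OF dense]) (simp add: cmod_def)
  ultimately show ?thesis
    using that[of "[:- Re \<mu>, 1:]" g] by simp
next
  case False
  then obtain g where "p = conj_quadratic \<mu> * g"
    using conj_quadratic_dvd[OF \<mu>] by (auto elim: dvdE)
  then show ?thesis
    using that[of "conj_quadratic \<mu>" g] dense_range_poly_op_conj_quadratic[OF dense False \<open>cmod \<mu> \<noteq> 1\<close>]
    by (simp add: conj_quadratic_def)
qed

lemma dense_range_poly_op_real:
  assumes dense: "closure recurrent_points = UNIV"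
  shows "p \<noteq> 0 \<Longrightarrow> \<forall>z. cmod z = 1 \<longrightarrow> poly (map_poly complex_of_real p) z \<noteq> 0
    \<Longrightarrow> dense_range (poly_op p)"
proof (induction "degree p" arbitrary: p rule: less_induct)
  case less
  show ?case
  proof (cases "degree p = 0")
    case True
    then obtain c where "p = [:c:]"
      by (rule degree_eq_zeroE)
    then show ?thesis
      using less.prems dense_range_poly_op_const by auto
  next
    case False
    then obtain \<mu> where \<mu>: "poly (map_poly complex_of_real p) \<mu> = 0"
      using fundamental_theorem_of_algebra[of "map_poly complex_of_real p"]
      by (auto simp: constant_degree degree_map_poly)
    moreover from this have "cmod \<mu> \<noteq> 1"
      using less.prems by auto
    ultimately obtain d g where p: "p = d * g" and "degree d > 0" and d: "dense_range (poly_op d)"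
      by (rule real_factor_with_dense_range[OF dense])
    have "g \<noteq> 0" "d \<noteq> 0"
      using p less.prems by auto
    then have "degree g < degree p"
      using p \<open>degree d > 0\<close> by (simp add: degree_mult_eq)
    moreover have "\<forall>z. cmod z = 1 \<longrightarrow> poly (map_poly complex_of_real g) z \<noteq> 0"
      using less.prems by (auto simp: p map_poly_of_real_mult)
    ultimately have "dense_range (poly_op g)"
      using less.hyps \<open>g \<noteq> 0\<close> by blast
    then show ?thesis
      unfolding p by (rule dense_range_poly_op_mult[OF d])
  qed
qed

lemma finite_dilations_without_dense_range:
  assumes dense: "closure recurrent_points = UNIV" and "q \<noteq> 0"
  shows "finite {r. r > 0 \<and> \<not> dense_range (poly_op (q \<circ>\<^sub>p [:0, of_real r:]))}"
proof (rule finite_subset)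
  let ?q = "map_poly complex_of_real q"
  show "finite (cmod ` {z. poly ?q z = 0})"
    using poly_roots_finite[of ?q] \<open>q \<noteq> 0\<close> by (simp add: map_poly_eq_0_iff)
  show "{r. r > 0 \<and> \<not> dense_range (poly_op (q \<circ>\<^sub>p [:0, of_real r:]))} \<subseteq> cmod ` {z. poly ?q z = 0}"
  proof
    fix r :: real
    assume r: "r \<in> {r. r > 0 \<and> \<not> dense_range (poly_op (q \<circ>\<^sub>p [:0, of_real r:]))}"
    then have "q \<circ>\<^sub>p [:0, r:] \<noteq> 0"
      using \<open>q \<noteq> 0\<close> by (simp add: pcompose_eq_0_iff)
    then have "\<exists>z. cmod z = 1 \<and> poly (map_poly complex_of_real (q \<circ>\<^sub>p [:0, r:])) z = 0"
      using dense_range_poly_op_real[OF dense] r by auto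
    then obtain z where "cmod z = 1" "poly ?q (z * of_real r) = 0"
      by (auto simp: map_poly_of_real_pcompose poly_pcompose map_poly_pCons)
    moreover have "cmod (z * of_real r) = r"
      using \<open>cmod z = 1\<close> r by (simp add: norm_mult)
    ultimately show "r \<in> cmod ` {z. poly ?q z = 0}"
      by (metis (mono_tags) image_eqI mem_Collect_eq)
  qed
qed

end

locale complex_tvs_operator = tvs_operator s T
  for s :: "complex \<Rightarrow> 'a::{ab_group_add,topological_space} \<Rightarrow> 'a" and T
begin

lemma dense_range_poly_op_complex:
  assumes dense: "closure recurrent_points = UNIV"
  shows "p \<noteq> 0 \<Longrightarrow> \<forall>z. cmod z = 1 \<longrightarrow> poly p z \<noteq> 0 \<Longrightarrow> dense_range (poly_op p)"
proof (induction "degree p" arbitrary: p rule: less_induct)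
  case less
  show ?case
  proof (cases "degree p = 0")
    case True
    then obtain c where "p = [:c:]"
      by (rule degree_eq_zeroE)
    then show ?thesis
      using less.prems dense_range_poly_op_const by auto
  next
    case False
    then obtain \<mu> where \<mu>: "poly p \<mu> = 0"
      using fundamental_theorem_of_algebra[of p] by (auto simp: constant_degree)
    then obtain g where p: "p = [:- \<mu>, 1:] * g"
      by (auto simp: poly_eq_0_iff_dvd elim: dvdE)
    have "g \<noteq> 0"
      using p less.prems by auto
    then have "degree g < degree p"
      using p by (simp add: degree_mult_eq del: mult_pCons_left)
    moreover have "\<forall>z. cmod z = 1 \<longrightarrow> poly g z \<noteq> 0"
      using less.prems by (auto simp: p)
    ultimately have "dense_range (poly_op g)"
      using less.hyps \<open>g \<noteq> 0\<close> by blast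
    moreover have "dense_range (poly_op [:- \<mu>, 1:])"
      using \<mu> less.prems by (intro dense_range_poly_op_linear[OF dense]) auto
    ultimately show ?thesis
      unfolding p by (intro dense_range_poly_op_mult)
  qed
qed

lemma finite_dilations_without_dense_range:
  assumes dense: "closure recurrent_points = UNIV" and "q \<noteq> 0"
  shows "finite {r. r > 0 \<and> \<not> dense_range (poly_op (q \<circ>\<^sub>p [:0, of_real r:]))}"
proof (rule finite_subset)
  show "finite (cmod ` {z. poly q z = 0})"
    using poly_roots_finite[of q] \<open>q \<noteq> 0\<close> by simp
  show "{r. r > 0 \<and> \<not> dense_range (poly_op (q \<circ>\<^sub>p [:0, of_real r:]))} \<subseteq> cmod ` {z. poly q z = 0}"
  proof
    fix r :: real
    assume r: "r \<in> {r. r > 0 \<and> \<not> dense_range (poly_op (q \<circ>\<^sub>p [:0, of_real r:]))}"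
    then have "q \<circ>\<^sub>p [:0, of_real r:] \<noteq> 0"
      using \<open>q \<noteq> 0\<close> by (simp add: pcompose_eq_0_iff)
    then have "\<exists>z. cmod z = 1 \<and> poly (q \<circ>\<^sub>p [:0, of_real r:]) z = 0"
      using dense_range_poly_op_complex[OF dense] r by auto
    then obtain z where "cmod z = 1" "poly q (z * of_real r) = 0"
      by (auto simp: poly_pcompose)
    moreover have "cmod (z * of_real r) = r"
      using \<open>cmod z = 1\<close> r by (simp add: norm_mult)
    ultimately show "r \<in> cmod ` {z. poly q z = 0}"
      by (metis (mono_tags) image_eqI mem_Collect_eq)
  qed
qed

end

section \<open>F-spaces: the \<open>G\<^sub>\<delta>\<close> property and Baire's theorem\<close>

lemma dense_Inter_open_dense:
  fixes \<G> :: "'a::topological_space set set"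
  assumes "completely_metrizable_space (euclidean :: 'a topology)" "countable \<G>"
    and "\<And>G. G \<in> \<G> \<Longrightarrow> open G \<and> closure G = UNIV"
  shows "closure (\<Inter>\<G>) = UNIV"
proof -
  have "euclidean closure_of (\<Inter>\<G>) = topspace euclidean"
  proof (rule Baire_category)
    show "completely_metrizable_space (euclidean :: 'a topology)
        \<or> locally_compact_space (euclidean :: 'a topology) \<and> regular_space (euclidean :: 'a topology)"
      using assms(1) by blast
    fix G
    assume "G \<in> \<G>"
    then show "openin euclidean G \<and> euclidean closure_of G = topspace euclidean"
      using assms(3) by simp
  qed (fact assms(2))
  then show ?thesis
    by simp
qed

locale F_space_operator = tvs_operator s T
  for s :: "'k::real_normed_field \<Rightarrow> 'a::{ab_group_add,topological_space} \<Rightarrow> 'a" and T +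
  assumes completely_metrizable: "completely_metrizable_space (euclidean :: 'a topology)"
    and separable: "separable_space (euclidean :: 'a topology)"
begin

text \<open>Any metric inducing the topology will do; we fix one.\<close>

definition d :: "'a \<Rightarrow> 'a \<Rightarrow> real" where
  "d = (SOME d. Metric_space UNIV d \<and> Metric_space.mtopology UNIV d = euclidean)"

lemma metric_d: "Metric_space UNIV d \<and> Metric_space.mtopology UNIV d = euclidean"
proof -
  obtain M :: "'a set" and d' where M: "Metric_space M d'" "euclidean = Metric_space.mtopology M d'"
    using completely_metrizable unfolding completely_metrizable_space_def by blast
  then have "M = UNIV"
    using Metric_space.topspace_mtopology[OF M(1)] by (metis topspace_euclidean)
  with M have "\<exists>d :: 'a \<Rightarrow> 'a \<Rightarrow> real. Metric_space UNIV d \<and> Metric_space.mtopology UNIV d = euclidean"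
    by (intro exI[of _ d']) simp
  then show ?thesis
    unfolding d_def by (rule someI_ex)
qed

sublocale md: Metric_space UNIV d
  using metric_d by blast

lemma mtopology_eq_euclidean: "md.mtopology = euclidean"
  using metric_d by blast

lemma in_closure_iff_d: "x \<in> closure A \<longleftrightarrow> (\<forall>e>0. \<exists>a\<in>A. d x a < e)"
  using md.metric_closure_of[of A] by (auto simp: mtopology_eq_euclidean)

lemma LIMSEQ_iff_d: "f \<longlonglongrightarrow> l \<longleftrightarrow> (\<forall>e>0. \<exists>N. \<forall>n\<ge>N. d (f n) l < e)"
  using md.limit_metric_sequentially[of f l] limitin_canonical_iff[of f l sequentially]
  by (simp add: mtopology_eq_euclidean)

lemma open_mball: "open (md.mball x e)"
  using md.openin_mball[of x e] by (simp add: mtopology_eq_euclidean)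

lemma open_displacement_lt:
  assumes "continuous_on UNIV g"
  shows "open {x. d (g x) x < e}"
proof -
  have "continuous_map euclidean euclidean (\<lambda>x. mdist (metric (UNIV, d)) (g x) x)"
    using assms by (intro continuous_map_mdist) (simp_all add: mtopology_eq_euclidean)
  then have "openin euclidean {x \<in> topspace euclidean. mdist (metric (UNIV, d)) (g x) x \<in> {..<e}}"
    by (rule openin_continuous_map_preimage) simp
  then show ?thesis
    by simp
qed

lemma subseq_LIMSEQ_if_frequently_near:
  fixes f :: "nat \<Rightarrow> 'a"
  assumes "\<And>N k. \<exists>n>N. d (f n) l < inverse (real (Suc k))"
  shows "\<exists>r. strict_mono r \<and> (\<lambda>k. f (r k)) \<longlonglongrightarrow> l"
proof -
  have "\<exists>n. d (f n) l < inverse (real (Suc 0))"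
    using assms[of 0 0] by blast
  moreover have "\<exists>n'. d (f n') l < inverse (real (Suc (Suc k))) \<and> n < n'" for k n
    using assms[of n "Suc k"] by blast
  ultimately obtain r where r: "\<And>k. d (f (r k)) l < inverse (real (Suc k)) \<and> r k < r (Suc k)"
    using dependent_nat_choice[where P = "\<lambda>k n. d (f n) l < inverse (real (Suc k))" and Q = "\<lambda>_ n n'. n < n'"]
    by blast
  have "(\<lambda>k. f (r k)) \<longlonglongrightarrow> l"
    unfolding LIMSEQ_iff_d
  proof (intro allI impI)
    fix e :: real
    assume "e > 0"
    then obtain K where K: "inverse (real (Suc K)) < e"
      using reals_Archimedean by blast
    have "d (f (r k)) l < e" if "k \<ge> K" for k
    proof -
      have "inverse (real (Suc k)) \<le> inverse (real (Suc K))"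
        using that by (simp add: le_imp_inverse_le)
      then show ?thesis
        using r[of k] K by linarith
    qed
    then show "\<exists>N. \<forall>k\<ge>N. d (f (r k)) l < e"
      by blast
  qed
  moreover have "strict_mono r"
    using r by (simp add: strict_mono_Suc_iff)
  ultimately show ?thesis
    by blast
qed

text \<open>In the inductive step, a return closer than the one at time \<open>N + 1\<close> happens after \<open>N + 1\<close>,
  unless \<open>T\<^bsup>N+1\<^esup> x = x\<close>, in which case \<open>x\<close> is periodic.\<close>

lemma returns_infinitely_often:
  assumes x: "x \<in> closure {(T ^^ n) x | n. n \<ge> 1}" and "e > 0"
  shows "\<exists>n>N. d ((T ^^ n) x) x < e"
  using \<open>e > 0\<close>
proof (induction N arbitrary: e)
  case 0
  then obtain n where "n \<ge> 1" "d x ((T ^^ n) x) < e"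
    using x unfolding in_closure_iff_d by blast
  then show ?case
    by (intro exI[of _ n]) (auto simp: md.commute)
next
  case (Suc N)
  show ?case
  proof (cases "(T ^^ Suc N) x = x")
    case True
    then have "(T ^^ (Suc N + Suc N)) x = x"
      by (simp only: funpow_add comp_apply)
    then show ?thesis
      using Suc.prems by (intro exI[of _ "Suc N + Suc N"]) auto
  next
    case False
    then have "min e (d ((T ^^ Suc N) x) x) > 0"
      using Suc.prems by simp
    then obtain n where "n > N" "d ((T ^^ n) x) x < min e (d ((T ^^ Suc N) x) x)"
      using Suc.IH by blast
    moreover from this have "n \<noteq> Suc N"
      by auto
    ultimately show ?thesis
      by (intro exI[of _ n]) auto
  qed
qed

definition return_set :: "nat \<Rightarrow> nat \<Rightarrow> 'a set" where
  "return_set N k = {x. \<exists>n>N. d ((T ^^ n) x) x < inverse (real (Suc k))}"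

lemma open_return_set: "open (return_set N k)"
proof -
  have "continuous_on UNIV (T ^^ n)" for n
    unfolding continuous_on_def using tendsto_funpow_T[OF tendsto_ident_at] by blast
  then have "open {x. d ((T ^^ n) x) x < inverse (real (Suc k))}" for n
    by (rule open_displacement_lt)
  moreover have "return_set N k = (\<Union>n\<in>{N<..}. {x. d ((T ^^ n) x) x < inverse (real (Suc k))})"
    by (auto simp: return_set_def)
  ultimately show ?thesis
    by (simp add: open_UN)
qed

lemma dense_return_set:
  assumes "recurrent T"
  shows "closure (return_set N k) = UNIV"
proof -
  have "{x. x \<in> closure {(T ^^ n) x | n. n \<ge> 1}} \<subseteq> return_set N k"
    using returns_infinitely_often by (auto simp: return_set_def)
  then have "closure {x. x \<in> closure {(T ^^ n) x | n. n \<ge> 1}} \<subseteq> closure (return_set N k)"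
    by (rule closure_mono)
  then show ?thesis
    using assms unfolding recurrent_def by blast
qed

lemma recurrent_pointI:
  assumes "\<And>N k. x \<in> return_set N k"
  shows "x \<in> recurrent_points"
proof -
  have "\<exists>n>N. d ((T ^^ n) x) x < inverse (real (Suc k))" for N k
    using assms by (simp add: return_set_def)
  then obtain r where "strict_mono r" "(\<lambda>k. (T ^^ r k) x) \<longlonglongrightarrow> x"
    using subseq_LIMSEQ_if_frequently_near[of "\<lambda>n. (T ^^ n) x" x] by blast
  then show ?thesis
    by (auto simp: recurrent_points_def)
qed

lemma closure_recurrent_points:
  assumes "recurrent T"
  shows "closure recurrent_points = UNIV"
proof -
  have "{x. x \<in> closure {(T ^^ n) x | n. n \<ge> 1}} \<subseteq> recurrent_points"
  proof safe
    fix x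
    assume "x \<in> closure {(T ^^ n) x | n. n \<ge> 1}"
    then show "x \<in> recurrent_points"
      using returns_infinitely_often by (intro recurrent_pointI) (simp add: return_set_def)
  qed
  then have "closure {x. x \<in> closure {(T ^^ n) x | n. n \<ge> 1}} \<subseteq> closure recurrent_points"
    by (rule closure_mono)
  then show ?thesis
    using assms unfolding recurrent_def by blast
qed

lemma cyclic_vector_iff_approximates:
  assumes "closure D = UNIV"
  shows "cyclic_vector s T x \<longleftrightarrow> (\<forall>c\<in>D. \<forall>k. \<exists>p. d c (poly_op p x) < inverse (real (Suc k)))"
proof
  assume "cyclic_vector s T x"
  then have "c \<in> closure (range (\<lambda>p. poly_op p x))" for c
    by (simp add: cyclic_vector_iff_dense_range dense_range_def)
  then show "\<forall>c\<in>D. \<forall>k. \<exists>p. d c (poly_op p x) < inverse (real (Suc k))"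
    unfolding in_closure_iff_d by simp
next
  assume approx: "\<forall>c\<in>D. \<forall>k. \<exists>p. d c (poly_op p x) < inverse (real (Suc k))"
  have "y \<in> closure (range (\<lambda>p. poly_op p x))" for y
    unfolding in_closure_iff_d
  proof (intro allI impI)
    fix e :: real
    assume "e > 0"
    then obtain c where c: "c \<in> D" "d y c < e / 2"
      using assms unfolding set_eq_iff in_closure_iff_d by (metis UNIV_I half_gt_zero)
    obtain k where k: "inverse (real (Suc k)) < e / 2"
      using \<open>e > 0\<close> reals_Archimedean half_gt_zero by blast
    obtain p where p: "d c (poly_op p x) < inverse (real (Suc k))"
      using approx c(1) by blast
    have "d y (poly_op p x) \<le> d y c + d c (poly_op p x)"
      by (rule md.triangle) simp_all
    then show "\<exists>a\<in>range (\<lambda>p. poly_op p x). d y a < e"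
      using c(2) k p by (intro bexI[of _ "poly_op p x"]) auto
  qed
  then show "cyclic_vector s T x"
    by (auto simp: cyclic_vector_iff_dense_range dense_range_def)
qed

lemma cyclic_vectors_eq_Inter:
  obtains \<U> :: "'a set set" where "countable \<U>" "\<And>U. U \<in> \<U> \<Longrightarrow> open U" "\<Inter>\<U> = {x. cyclic_vector s T x}"
proof -
  obtain D :: "'a set" where D: "countable D" "closure D = UNIV"
    using separable by (auto simp: separable_space_def)
  define W where "W c k = {x. \<exists>p. d c (poly_op p x) < inverse (real (Suc k))}" for c k
  have "open (W c k)" for c k
  proof -
    have "open (poly_op p -` md.mball c (inverse (real (Suc k))))" for p
      using continuous_on_open_vimage[OF open_UNIV, of "poly_op p"] continuous_on_poly_op open_mball
      by simp
    moreover have "W c k = (\<Union>p. poly_op p -` md.mball c (inverse (real (Suc k))))"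
      by (auto simp: W_def)
    ultimately show ?thesis
      by (simp add: open_UN)
  qed
  moreover have "\<Inter>((\<lambda>(c, k). W c k) ` (D \<times> UNIV)) = {x. cyclic_vector s T x}"
    using cyclic_vector_iff_approximates[OF D(2)] by (auto simp: W_def)
  ultimately show ?thesis
    using D(1) by (intro that[of "(\<lambda>(c, k). W c k) ` (D \<times> UNIV)"]) auto
qed

lemma gdelta_cyclic_vectors: "gdelta_in euclidean {x. cyclic_vector s T x}"
proof -
  obtain \<U> :: "'a set set" where "countable \<U>" "\<And>U. U \<in> \<U> \<Longrightarrow> open U" "\<Inter>\<U> = {x. cyclic_vector s T x}"
    using cyclic_vectors_eq_Inter by blast
  then show ?thesis
    unfolding gdelta_in_alt intersection_of_def by (intro conjI exI[of _ \<U>]) auto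
qed

lemma exists_recurrent_cyclic_vector:
  assumes rec: "recurrent T" and dense: "closure {x. cyclic_vector s T x} = UNIV"
  obtains x where "cyclic_vector s T x" "x \<in> recurrent_points"
proof -
  obtain \<U> :: "'a set set" where \<U>: "countable \<U>" "\<And>U. U \<in> \<U> \<Longrightarrow> open U" "\<Inter>\<U> = {x. cyclic_vector s T x}"
    using cyclic_vectors_eq_Inter by blast
  define \<G> where "\<G> = \<U> \<union> range (\<lambda>(N, k). return_set N k)"
  have "closure (\<Inter>\<G>) = UNIV"
  proof (rule dense_Inter_open_dense[OF completely_metrizable])
    show "countable \<G>"
      using \<U>(1) by (simp add: \<G>_def)
    fix G
    assume G: "G \<in> \<G>"
    show "open G \<and> closure G = UNIV"
    proof (cases "G \<in> \<U>")
      case True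
      then have "{x. cyclic_vector s T x} \<subseteq> G"
        using \<U>(3) by blast
      then have "closure {x. cyclic_vector s T x} \<subseteq> closure G"
        by (rule closure_mono)
      then show ?thesis
        using True \<U>(2) dense by blast
    next
      case False
      then obtain N k where "G = return_set N k"
        using G by (auto simp: \<G>_def)
      then show ?thesis
        using open_return_set dense_return_set[OF rec] by simp
    qed
  qed
  then have "\<Inter>\<G> \<noteq> {}"
    by (metis closure_empty UNIV_not_empty)
  then obtain x where x: "x \<in> \<Inter>\<G>"
    by blast
  show thesis
  proof (rule that)
    show "cyclic_vector s T x"
      using x \<U>(3) by (auto simp: \<G>_def)
    show "x \<in> recurrent_points"
      using x by (intro recurrent_pointI) (auto simp: \<G>_def)
  qed
qed

lemma dense_gdelta_cyclic_vectors_and_quasi_rigid: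
  assumes rec: "recurrent T" and "cyclic s T"
    and dilations: "\<And>q. q \<noteq> 0 \<Longrightarrow> finite {r. r > 0 \<and> \<not> dense_range (poly_op (q \<circ>\<^sub>p [:0, of_real r:]))}"
  shows "gdelta_in euclidean {x. cyclic_vector s T x} \<and> closure {x. cyclic_vector s T x} = UNIV
    \<and> quasi_rigid T"
proof -
  obtain x0 where "cyclic_vector s T x0"
    using \<open>cyclic s T\<close> by (auto simp: cyclic_def)
  then have dense: "closure {x. cyclic_vector s T x} = UNIV"
    using dense_cyclic_vectors[OF dilations, of x0] by blast
  obtain x where "cyclic_vector s T x" "x \<in> recurrent_points"
    by (rule exists_recurrent_cyclic_vector[OF rec dense])
  then have "quasi_rigid T"
    by (rule quasi_rigid_if_recurrent_cyclic_vector)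
  then show ?thesis
    using dense gdelta_cyclic_vectors by blast
qed

end

lemma F_space_operatorI:
  fixes s :: "'k::real_normed_field \<Rightarrow> 'a::{ab_group_add,topological_space} \<Rightarrow> 'a"
  assumes "F_space s" "separable_space (euclidean :: 'a topology)"
    and "Vector_Spaces.linear s s T" "continuous_on UNIV T"
  shows "F_space_operator s T"
  using assms
  unfolding F_space_operator_def F_space_operator_axioms_def tvs_operator_def F_space_def
  by blast

theorem mainTheorem7:
  fixes sR :: "real \<Rightarrow> 'a::{ab_group_add,topological_space} \<Rightarrow> 'a"
    and T :: "'a \<Rightarrow> 'a"
    and sC :: "complex \<Rightarrow> 'b::{ab_group_add,topological_space} \<Rightarrow> 'b"
    and S :: "'b \<Rightarrow> 'b"
  shows
   "(F_space sR \<and> separable_space (euclidean :: 'a topology) \<and> infinite_dimensional sR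
      \<and> Vector_Spaces.linear sR sR T \<and> continuous_on UNIV T
      \<and> recurrent T \<and> cyclic sR T
     \<longrightarrow> gdelta_in euclidean {x. cyclic_vector sR T x}
       \<and> closure {x. cyclic_vector sR T x} = UNIV
       \<and> quasi_rigid T)
  \<and> (F_space sC \<and> separable_space (euclidean :: 'b topology) \<and> infinite_dimensional sC
      \<and> Vector_Spaces.linear sC sC S \<and> continuous_on UNIV S
      \<and> recurrent S \<and> cyclic sC S
     \<longrightarrow> gdelta_in euclidean {x. cyclic_vector sC S x}
       \<and> closure {x. cyclic_vector sC S x} = UNIV
       \<and> quasi_rigid S)"
proof (rule conjI; rule impI)
  assume H: "F_space sR \<and> separable_space (euclidean :: 'a topology) \<and> infinite_dimensional sR
      \<and> Vector_Spaces.linear sR sR T \<and> continuous_on UNIV T \<and> recurrent T \<and> cyclic sR T"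
  interpret F_space_operator sR T
    using H by (intro F_space_operatorI) auto
  interpret real_tvs_operator sR T
    unfolding real_tvs_operator_def by (rule tvs_operator_axioms)
  show "gdelta_in euclidean {x. cyclic_vector sR T x} \<and> closure {x. cyclic_vector sR T x} = UNIV
      \<and> quasi_rigid T"
    using H finite_dilations_without_dense_range[OF closure_recurrent_points]
    by (intro dense_gdelta_cyclic_vectors_and_quasi_rigid) auto
next
  assume H: "F_space sC \<and> separable_space (euclidean :: 'b topology) \<and> infinite_dimensional sC
      \<and> Vector_Spaces.linear sC sC S \<and> continuous_on UNIV S \<and> recurrent S \<and> cyclic sC S"
  interpret F_space_operator sC S
    using H by (intro F_space_operatorI) auto
  interpret complex_tvs_operator sC S
    unfolding complex_tvs_operator_def by (rule tvs_operator_axioms)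
  show "gdelta_in euclidean {x. cyclic_vector sC S x} \<and> closure {x. cyclic_vector sC S x} = UNIV
      \<and> quasi_rigid S"
    using H finite_dilations_without_dense_range[OF closure_recurrent_points]
    by (intro dense_gdelta_cyclic_vectors_and_quasi_rigid) auto
qed

end
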